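(* The $2\times 2$ chessboard $C=[-1,0]\times[-1,0]\,\cup\,[0,1]\times[0,1]\subset\mathbb{R}^2$ is neither drawable nor closed-disk drawable.
   Context: For $A\subseteq\mathbb{R}^2$ let $N(A)=\{x\in\mathbb{R}^2: |x-a|<1 \text{ for some } a\in A\}$ and $N_{\le}(A)=\{x\in\mathbb{R}^2: |x-a|\le 1 \text{ for some } a\in A\}$. Let $\mathcal{D}_1=\{N(A_1): A_1\subseteq\mathbb{R}^2\}$ and for $n\ge 2$ let $\mathcal{D}_n=\{D\cup N(A_n): D\in\mathcal{D}_{n-1}, A_n\subseteq\mathbb{R}^2\}$ if $n$ is odd and $\mathcal{D}_n=\{D\setminus N(A_n): D\in\mathcal{D}_{n-1}, A_n\subseteq\mathbb{R}^2\}$ if $n$ is even. A set is drawable if it lies in $\mathcal{D}=\bigcup_{n\ge1}\mathcal{D}_n$. The collection $\mathcal{D}_{\le}$ of closed-disk drawable sets is defined in the same way with every $N(\cdot)$ replaced by $N_{\le}(\cdot)$. *)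

theory Defs
  imports "HOL-Analysis.Analysis"
begin

type_synonym plane = "real ^ 2"

definition pt :: "real \<Rightarrow> real \<Rightarrow> plane" where
  "pt a b = (\<chi> i. if i = 1 then a else b)"

definition N_open :: "plane set \<Rightarrow> plane set" where
  "N_open A = {x. \<exists>a\<in>A. dist x a < 1}"

definition N_closed :: "plane set \<Rightarrow> plane set" where
  "N_closed A = {x. \<exists>a\<in>A. dist x a \<le> 1}"

fun Dlevel :: "(plane set \<Rightarrow> plane set) \<Rightarrow> nat \<Rightarrow> plane set set" where
  "Dlevel N 0 = {}"
| "Dlevel N (Suc 0) = {N A | A. True}"
| "Dlevel N (Suc (Suc m)) =
     (if odd (Suc (Suc m))
      then {D \<union> N A | D A. D \<in> Dlevel N (Suc m)}
      else {D - N A | D A. D \<in> Dlevel N (Suc m)})"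

definition drawable :: "plane set \<Rightarrow> bool" where
  "drawable S \<longleftrightarrow> (\<exists>n\<ge>1. S \<in> Dlevel N_open n)"

definition closed_drawable :: "plane set \<Rightarrow> bool" where
  "closed_drawable S \<longleftrightarrow> (\<exists>n\<ge>1. S \<in> Dlevel N_closed n)"

definition chessboard :: "plane set" where
  "chessboard = {pt a b | a b. -1 \<le> a \<and> a \<le> 0 \<and> -1 \<le> b \<and> b \<le> 0}
              \<union> {pt a b | a b. 0 \<le> a \<and> a \<le> 1 \<and> 0 \<le> b \<and> b \<le> 1}"

end

theory Submission
  imports Defs
begin

(* Call S simple at x (for a neighbourhood operator N) if on some ball around x the set S is empty,
   or some N A accumulating at x lies on that ball entirely inside or entirely outside S.
   Adding or removing a set N A preserves this: if N A accumulates at x it becomes the witness,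
   otherwise S does not change near x. So every drawable set is simple at every point.
   The chessboard is not simple at the origin: if N A accumulates at 0, then A has a point a with
   |a| < 1 + d, and the open unit disc around a, which lies in N A, contains short vectors t u both
   in the chessboard (u = +-e1, +-e2) and outside it (u = +-(-1,2), +-(2,-1)), for u chosen among
   these with 2 (u . a) >= |a|. *)

lemma pt_nth_1 [simp]: "pt a b $ 1 = a"
  and pt_nth_2 [simp]: "pt a b $ 2 = b"
  by (simp_all add: pt_def)

lemma inner_plane: "x \<bullet> y = x$1 * y$1 + x$2 * y$2" for x y :: plane
  by (simp add: inner_vec_def sum_2)

lemma norm_plane_power2: "norm x ^ 2 = x$1 ^ 2 + x$2 ^ 2" for x :: plane
  unfolding power2_norm_eq_inner inner_plane by (simp add: power2_eq_square)

lemma mem_chessboard_iff: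
  "x \<in> chessboard \<longleftrightarrow>
     (-1 \<le> x$1 \<and> x$1 \<le> 0 \<and> -1 \<le> x$2 \<and> x$2 \<le> 0) \<or> (0 \<le> x$1 \<and> x$1 \<le> 1 \<and> 0 \<le> x$2 \<and> x$2 \<le> 1)"
  unfolding chessboard_def by (auto simp: vec_eq_iff forall_2)

lemma exists_direction_of_pair:
  fixes a u v :: "'a::real_inner"
  assumes "norm a ^ 2 \<le> (u \<bullet> a) ^ 2 + (v \<bullet> a) ^ 2"
  shows "\<exists>w\<in>{u, -u, v, -v}. norm a \<le> 2 * (w \<bullet> a)"
proof -
  obtain c where c: "c \<in> {u, v}" "norm a ^ 2 \<le> 2 * (c \<bullet> a) ^ 2"
    using that[of u] that[of v] assms by (cases "(v \<bullet> a) ^ 2 \<le> (u \<bullet> a) ^ 2") simp_all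
  moreover have "(2 * \<bar>c \<bullet> a\<bar>) ^ 2 = 4 * (c \<bullet> a) ^ 2"
    by (simp add: power_mult_distrib)
  ultimately have "norm a ^ 2 \<le> (2 * \<bar>c \<bullet> a\<bar>) ^ 2"
    using zero_le_power2[of "c \<bullet> a"] by linarith
  then have "norm a \<le> 2 * \<bar>c \<bullet> a\<bar>"
    by (rule power2_le_imp_le) simp
  then show ?thesis
    using c(1) by (cases "c \<bullet> a \<ge> 0") auto
qed

lemma scaled_direction_in_unit_ball:
  fixes a u :: "'a::real_inner"
  assumes t: "0 < t" "t \<le> 1/40" and a: "norm a < 1 + t/4" "norm a \<le> 2 * (u \<bullet> a)"
    and u: "norm u \<le> 3"
  shows "t *\<^sub>R u \<in> ball a 1"
proof -
  define s where "s = norm a"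
  have "t * norm u \<le> 3 * t"
    using u t by simp
  then have square: "(t * norm u) ^ 2 \<le> 9 * t ^ 2"
    using t power_mono[of "t * norm u" "3 * t" 2] by (simp add: power_mult_distrib)
  have inner: "t * s \<le> 2 * t * (u \<bullet> a)"
    using a(2) t unfolding s_def by simp
  have "dist (t *\<^sub>R u) a ^ 2 = (t * norm u) ^ 2 + s ^ 2 - 2 * t * (u \<bullet> a)"
    using dot_norm_neg[of "t *\<^sub>R u" a] t(1) by (simp add: s_def dist_norm power_mult_distrib)
  also have "\<dots> \<le> 9 * t ^ 2 + s * (s - t)"
    using square inner by (simp add: algebra_simps power2_eq_square)
  also have "\<dots> < 1"
  proof -
    have t_square: "t ^ 2 \<le> t / 40"
      using t by (simp add: power2_eq_square)
    show ?thesis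
    proof (cases "s \<le> t")
      case True
      then have "s * (s - t) \<le> 0"
        unfolding s_def by (simp add: mult_nonneg_nonpos)
      then show ?thesis
        using t t_square by linarith
    next
      case False
      have "s * (s - t) < (1 + t/4) * (1 + t/4 - t)"
        using False a(1) t unfolding s_def by (intro mult_strict_mono) auto
      also have "\<dots> = 1 - t/2 - 3/16 * t ^ 2"
        by (simp add: algebra_simps power2_eq_square)
      finally show ?thesis
        using t t_square by linarith
    qed
  qed
  finally show ?thesis
    by (simp add: dist_commute power2_less_imp_less)
qed

lemma chessboard_direction:
  fixes a :: plane
  obtains u where "norm a \<le> 2 * (u \<bullet> a)" "norm u \<le> 3"
    "\<And>t. 0 \<le> t \<Longrightarrow> t \<le> 1 \<Longrightarrow> t *\<^sub>R u \<in> chessboard"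
proof -
  have "norm a ^ 2 \<le> (pt 1 0 \<bullet> a) ^ 2 + (pt 0 1 \<bullet> a) ^ 2"
    by (simp add: norm_plane_power2 inner_plane)
  then obtain u where u: "u \<in> {pt 1 0, - pt 1 0, pt 0 1, - pt 0 1}" "norm a \<le> 2 * (u \<bullet> a)"
    by (blast dest: exists_direction_of_pair)
  moreover have "norm u \<le> 3"
    using u(1) by (auto simp: norm_vec_def L2_set_def sum_2)
  moreover have "t *\<^sub>R u \<in> chessboard" if "0 \<le> t" "t \<le> 1" for t
    using u(1) that by (auto simp: mem_chessboard_iff)
  ultimately show thesis
    using that by blast
qed

lemma off_chessboard_direction:
  fixes a :: plane
  obtains u where "norm a \<le> 2 * (u \<bullet> a)" "norm u \<le> 3"
    "\<And>t. 0 < t \<Longrightarrow> t *\<^sub>R u \<notin> chessboard"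
proof -
  have "norm a ^ 2 \<le> (pt (-1) 2 \<bullet> a) ^ 2 + (pt 2 (-1) \<bullet> a) ^ 2"
    using zero_le_power2[of "a$1 - a$2"] unfolding norm_plane_power2 inner_plane
    by (simp add: algebra_simps power2_eq_square)
  then obtain u where u: "u \<in> {pt (-1) 2, - pt (-1) 2, pt 2 (-1), - pt 2 (-1)}"
      "norm a \<le> 2 * (u \<bullet> a)"
    by (blast dest: exists_direction_of_pair)
  moreover have "norm u \<le> 3"
  proof (rule power2_le_imp_le)
    show "norm u ^ 2 \<le> 3 ^ 2"
      using u(1) by (auto simp: norm_plane_power2)
  qed simp
  moreover have "t *\<^sub>R u \<notin> chessboard" if "0 < t" for t
    using u(1) that by (auto simp: mem_chessboard_iff)
  ultimately show thesis
    using that by blast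
qed

lemma chessboard_mixed_near_unit_balls:
  assumes "0 < r"
  obtains d where "0 < d"
    "\<And>a. norm a < 1 + d \<Longrightarrow> ball a 1 \<inter> ball 0 r \<inter> chessboard \<noteq> {}"
    "\<And>a. norm a < 1 + d \<Longrightarrow> ball a 1 \<inter> ball 0 r - chessboard \<noteq> {}"
proof -
  define t where "t = min (r/4) (1/40)"
  have t: "0 < t" "t \<le> 1/40" "4 * t \<le> r"
    using assms by (auto simp: t_def)
  have near: "t *\<^sub>R u \<in> ball a 1 \<inter> ball 0 r"
    if "norm a < 1 + t/4" "norm a \<le> 2 * (u \<bullet> a)" "norm u \<le> 3" for a u
  proof -
    have "t * norm u \<le> t * 3"
      using t that(3) by (intro mult_left_mono) auto
    moreover have "norm (t *\<^sub>R u) = t * norm u"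
      using t by simp
    ultimately have "norm (t *\<^sub>R u) < r"
      using t by linarith
    then show ?thesis
      using scaled_direction_in_unit_ball[OF t(1,2) that] by (simp only: Int_iff mem_ball_0)
  qed
  show thesis
  proof (rule that[of "t/4"])
    show "0 < t/4"
      using t by simp
  next
    fix a :: plane
    assume a: "norm a < 1 + t/4"
    obtain u where u: "norm a \<le> 2 * (u \<bullet> a)" "norm u \<le> 3"
      and "\<And>s. 0 \<le> s \<Longrightarrow> s \<le> 1 \<Longrightarrow> s *\<^sub>R u \<in> chessboard"
      using chessboard_direction[of a] by blast
    then have "t *\<^sub>R u \<in> chessboard"
      using t by simp
    then show "ball a 1 \<inter> ball 0 r \<inter> chessboard \<noteq> {}"
      using near[OF a u] by blast
    obtain v where v: "norm a \<le> 2 * (v \<bullet> a)" "norm v \<le> 3"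
      and "\<And>s. 0 < s \<Longrightarrow> s *\<^sub>R v \<notin> chessboard"
      using off_chessboard_direction[of a] by blast
    then have "t *\<^sub>R v \<notin> chessboard"
      using t by simp
    then show "ball a 1 \<inter> ball 0 r - chessboard \<noteq> {}"
      using near[OF a v] by blast
  qed
qed

definition simple_at :: "(plane set \<Rightarrow> plane set) \<Rightarrow> plane \<Rightarrow> plane set \<Rightarrow> bool" where
  "simple_at N x S \<longleftrightarrow> (\<exists>r>0. S \<inter> ball x r = {} \<or>
     (\<exists>A. x \<in> closure (N A) \<and> (N A \<inter> ball x r \<subseteq> S \<or> N A \<inter> ball x r \<inter> S = {})))"

lemma simple_at_empty: "simple_at N x {}"
  unfolding simple_at_def by (intro exI[of _ 1]) simp

lemma simple_at_local:
  assumes "simple_at N x S" "0 < e" "S \<inter> ball x e = T \<inter> ball x e"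
  shows "simple_at N x T"
proof -
  obtain r where "0 < r" and r: "S \<inter> ball x r = {} \<or>
      (\<exists>A. x \<in> closure (N A) \<and> (N A \<inter> ball x r \<subseteq> S \<or> N A \<inter> ball x r \<inter> S = {}))"
    using assms(1) unfolding simple_at_def by blast
  define m where "m = min r e"
  have "ball x m \<subseteq> ball x r" "ball x m \<subseteq> ball x e"
    by (simp_all add: m_def subset_ball)
  then have "S \<inter> ball x m = {} \<or>
      (\<exists>A. x \<in> closure (N A) \<and> (N A \<inter> ball x m \<subseteq> S \<or> N A \<inter> ball x m \<inter> S = {}))"
    using r by blast
  then have "T \<inter> ball x m = {} \<or>
      (\<exists>A. x \<in> closure (N A) \<and> (N A \<inter> ball x m \<subseteq> T \<or> N A \<inter> ball x m \<inter> T = {}))"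
    using assms(3) \<open>ball x m \<subseteq> ball x e\<close> by blast
  moreover have "0 < m"
    using \<open>0 < r\<close> assms(2) by (simp add: m_def)
  ultimately show ?thesis
    unfolding simple_at_def by blast
qed

lemma simple_at_Un_Diff:
  assumes "simple_at N x S"
  shows "simple_at N x (S \<union> N A)" "simple_at N x (S - N A)"
proof -
  have "simple_at N x (S \<union> N A) \<and> simple_at N x (S - N A)"
  proof (cases "x \<in> closure (N A)")
    case True
    then show ?thesis
      unfolding simple_at_def by (intro conjI exI[of _ 1] exI[of _ A]) auto
  next
    case False
    then obtain e where "0 < e" "\<forall>y\<in>N A. e \<le> dist y x"
      unfolding closure_approachable by (auto simp: not_less)
    then have "N A \<inter> ball x e = {}"
      by (auto simp: dist_commute)
    then have "S \<inter> ball x e = (S \<union> N A) \<inter> ball x e" "S \<inter> ball x e = (S - N A) \<inter> ball x e"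
      by blast+
    then show ?thesis
      using simple_at_local[OF assms \<open>0 < e\<close>] by blast
  qed
  then show "simple_at N x (S \<union> N A)" "simple_at N x (S - N A)"
    by blast+
qed

lemma simple_at_Dlevel: "S \<in> Dlevel N n \<Longrightarrow> simple_at N x S"
proof (induction N n arbitrary: S rule: Dlevel.induct)
  case (2 N)
  then obtain A where "S = {} \<union> N A"
    by auto
  then show ?case
    using simple_at_Un_Diff(1)[OF simple_at_empty] by metis
next
  case (3 N m)
  then show ?case
    using simple_at_Un_Diff by (auto split: if_splits)
qed simp

lemma not_simple_at_chessboard:
  assumes "\<And>A. N_open A \<subseteq> N A" "\<And>A. N A \<subseteq> N_closed A"
  shows "\<not> simple_at N 0 chessboard"
proof
  assume "simple_at N 0 chessboard"
  then obtain r where "0 < r" and r: "chessboard \<inter> ball 0 r = {} \<or>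
      (\<exists>A. 0 \<in> closure (N A) \<and>
        (N A \<inter> ball 0 r \<subseteq> chessboard \<or> N A \<inter> ball 0 r \<inter> chessboard = {}))"
    unfolding simple_at_def by blast
  moreover have "0 \<in> chessboard \<inter> ball 0 r"
    using \<open>0 < r\<close> by (simp add: mem_chessboard_iff)
  ultimately obtain A where "0 \<in> closure (N A)"
    and decided: "N A \<inter> ball 0 r \<subseteq> chessboard \<or> N A \<inter> ball 0 r \<inter> chessboard = {}"
    by blast
  obtain d where "0 < d"
    and mixed: "\<And>a. norm a < 1 + d \<Longrightarrow> ball a 1 \<inter> ball 0 r \<inter> chessboard \<noteq> {}"
      "\<And>a. norm a < 1 + d \<Longrightarrow> ball a 1 \<inter> ball 0 r - chessboard \<noteq> {}"
    using chessboard_mixed_near_unit_balls[OF \<open>0 < r\<close>] by blast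
  obtain y where "y \<in> N A" "norm y < d"
    using \<open>0 \<in> closure (N A)\<close> \<open>0 < d\<close> unfolding closure_approachable by auto
  then obtain a where "a \<in> A" "dist y a \<le> 1"
    using assms(2) unfolding N_closed_def by blast
  have "norm a \<le> norm y + dist y a"
    by (metis dist_0_norm dist_commute dist_triangle)
  then have "norm a < 1 + d"
    using \<open>norm y < d\<close> \<open>dist y a \<le> 1\<close> by linarith
  moreover have "ball a 1 \<subseteq> N A"
    using \<open>a \<in> A\<close> assms(1) unfolding N_open_def by (force simp: dist_commute)
  ultimately have "N A \<inter> ball 0 r \<inter> chessboard \<noteq> {}" "N A \<inter> ball 0 r - chessboard \<noteq> {}"
    using mixed by blast+
  then show False
    using decided by blast
qed

theorem theorem1p1:
  shows "\<not> drawable chessboard \<and> \<not> closed_drawable chessboard"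
proof -
  have "N_open A \<subseteq> N_closed A" for A
    unfolding N_open_def N_closed_def by force
  then have "\<not> simple_at N_open 0 chessboard" "\<not> simple_at N_closed 0 chessboard"
    by (simp_all add: not_simple_at_chessboard)
  then show ?thesis
    unfolding drawable_def closed_drawable_def by (metis simple_at_Dlevel)
qed

end
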